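(* Let $\Omega\subset\mathbb{R}^n$ be a convex polytope with non-empty interior. Then the function $\varepsilon\mapsto\mathrm{vol}(L_\varepsilon(\Omega))$ on $[0,\mathrm{In}(\Omega)]$ is continuously differentiable with a decreasing derivative; consequently it is concave, and $$\mathrm{vol}(L_\varepsilon(\Omega))\ge \varepsilon\,\frac{\mathrm{vol}(\Omega)}{\mathrm{In}(\Omega)}\ge \frac{g(\varepsilon)}{n}$$ for all $\varepsilon\in[0,\mathrm{In}(\Omega)]$, where $g(\varepsilon)=\mathrm{vol}(\Omega)\left(1-\big(1-\frac{\varepsilon}{\mathrm{In}(\Omega)}\big)^{n}\right)$.
   Context: $\mathrm{vol}$ is $n$-dimensional Lebesgue measure. $\mathrm{In}(\Omega)$ is the inradius of $\Omega$: the radius of the largest ball contained in $\Omega$. The $\varepsilon$-inner neighbourhood is $L_\varepsilon(\Omega)=\{x\in\Omega:\|x-y\|\le\varepsilon\text{ for some }y\in\partial\Omega\}$. *)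

theory Defs
  imports "HOL-Analysis.Analysis"
begin

definition vol :: "'a::euclidean_space set \<Rightarrow> real" where
  "vol S = measure lebesgue S"

definition inradius :: "'a::euclidean_space set \<Rightarrow> real" where
  "inradius S = Sup {r. r \<ge> 0 \<and> (\<exists>x. cball x r \<subseteq> S)}"

definition inner_nbhd :: "real \<Rightarrow> 'a::euclidean_space set \<Rightarrow> 'a set" where
  "inner_nbhd \<epsilon> S = {x \<in> S. \<exists>y \<in> frontier S. dist x y \<le> \<epsilon>}"

end

(*
  Write the polytope as Omega = {x. a_p . x <= b_p for p in P} with unit normals a_p.  For x in Omega
  the distance to the boundary is depth x = min_p (b_p - a_p . x), so L_eps = {x in Omega. depth x <= eps}.
  Split Omega into cells according to which facet attains the minimum.  Translating a cell along its
  normal changes depth uniformly, so the volume of the shell {t < depth <= t + d} is antitone in t and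
  V(eps) = vol L_eps is concave.  Conversely, moving a point of the shell {t - d < depth <= t} inward by d
  along the normal of its facet lands in the next shell, unless the point lies within O(d) of two
  non-parallel facets; such corners have volume O(d^2), measured by packing disjoint translates of a
  double slab into a ball.  Hence V(t) - V(t - d) <= V(t + d) - V(t) + K d^2: the one-sided derivatives
  of V agree, and a continuous monotone choice of them is the derivative.  The lower bounds follow from
  concavity and Bernoulli's inequality.
*)

theory Submission
  imports Defs
begin

definition slope :: "(real \<Rightarrow> real) \<Rightarrow> real \<Rightarrow> real \<Rightarrow> real" where
  "slope F s t = (F t - F s) / (t - s)"

lemma slope_commute: "slope F s t = slope F t s"
  unfolding slope_def by (metis minus_diff_eq minus_divide_divide)

lemma tendsto_slope:
  assumes "continuous_on S F" "t \<in> S" "c \<noteq> t"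
  shows "((\<lambda>y. slope F c y) \<longlongrightarrow> slope F c t) (at t within S)"
proof -
  have "(F \<longlongrightarrow> F t) (at t within S)"
    using assms by (simp add: continuous_on_def)
  then show ?thesis
    unfolding slope_def using assms(3) by (intro tendsto_intros) auto
qed

lemma concave_on_slope_le:
  assumes "concave_on I F" "x \<in> I" "y \<in> I" "x < t" "t < y"
  shows "slope F x y \<le> slope F x t" and "slope F t y \<le> slope F x y"
proof -
  have convex: "convex_on I (\<lambda>x. - F x)"
    using assms(1) by (simp add: concave_on_def)
  have neg: "(- F u - - F v) / (u - v) = - slope F u v" for u v
    by (simp add: slope_commute[of F u v] slope_def minus_divide_left)
      (metis minus_diff_eq minus_divide_divide)
  show "slope F x y \<le> slope F x t" "slope F t y \<le> slope F x y"
    using convex_on_slope_le[OF convex assms(2-5)] unfolding neg by simp_all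
qed

lemma concave_on_Icc_above_chord_from_origin:
  fixes F :: "real \<Rightarrow> real"
  assumes "concave_on {0..r} F" "0 < r" "0 \<le> F 0" "\<epsilon> \<in> {0..r}"
  shows "\<epsilon> * F r / r \<le> F \<epsilon>"
proof -
  have "(F r - F 0) / r * \<epsilon> + F 0 \<le> F \<epsilon>"
    using concave_onD_Icc'[OF assms(1,4)] by simp
  moreover have "(F r - F 0) / r * \<epsilon> + F 0 = \<epsilon> * F r / r + F 0 * (1 - \<epsilon> / r)"
    using assms(2) by (simp add: field_simps)
  moreover have "0 \<le> F 0 * (1 - \<epsilon> / r)"
    using assms by simp
  ultimately show ?thesis
    by linarith
qed

lemma midpoint_concave_nonneg_if_zero_at_ends:
  fixes \<psi> :: "real \<Rightarrow> real"
  assumes cont: "continuous_on {x..z} \<psi>"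
    and mid: "\<And>s r. x \<le> s \<Longrightarrow> s \<le> r \<Longrightarrow> r \<le> z \<Longrightarrow> \<psi> s + \<psi> r \<le> 2 * \<psi> ((s + r) / 2)"
    and ends: "\<psi> x = 0" "\<psi> z = 0" and "y \<in> {x..z}"
  shows "0 \<le> \<psi> y"
proof (rule ccontr)
  \<comment> \<open>The leftmost point where \<open>\<psi>\<close> attains its negative minimum would violate midpoint concavity.\<close>
  assume "\<not> 0 \<le> \<psi> y"
  obtain w where w: "w \<in> {x..z}" "\<And>v. v \<in> {x..z} \<Longrightarrow> \<psi> w \<le> \<psi> v"
    using continuous_attains_inf[OF compact_Icc _ cont] \<open>y \<in> {x..z}\<close> by fastforce
  define M where "M = {s \<in> {x..z}. \<psi> s = \<psi> w}"
  have "closed M"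
    unfolding M_def by (rule continuous_closed_preimage_constant[OF cont]) auto
  moreover have "M \<noteq> {}" "bdd_below M"
    using w unfolding M_def by (auto intro: bdd_belowI[of _ x])
  ultimately have "Inf M \<in> M"
    by (rule closed_contains_Inf[rotated 2])
  define s0 where "s0 = Inf M"
  have "\<psi> s0 = \<psi> w" "s0 \<in> {x..z}"
    using \<open>Inf M \<in> M\<close> unfolding s0_def M_def by auto
  with ends w(2)[OF \<open>y \<in> {x..z}\<close>] \<open>\<not> 0 \<le> \<psi> y\<close> have "x < s0" "s0 < z"
    by (metis atLeastAtMost_iff order.order_iff_strict order.trans)+
  define d where "d = min (s0 - x) (z - s0)"
  have d: "0 < d" "s0 - d \<in> {x..z}" "s0 + d \<in> {x..z}"
    using \<open>x < s0\<close> \<open>s0 < z\<close> unfolding d_def by auto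
  have "s0 - d \<notin> M"
    using cInf_lower[OF _ \<open>bdd_below M\<close>, of "s0 - d"] \<open>0 < d\<close> unfolding s0_def by auto
  then have "\<psi> s0 < \<psi> (s0 - d)"
    using w(2)[OF d(2)] \<open>\<psi> s0 = \<psi> w\<close> d(2) unfolding M_def by auto
  moreover have "\<psi> s0 \<le> \<psi> (s0 + d)"
    using w(2)[OF d(3)] \<open>\<psi> s0 = \<psi> w\<close> by simp
  moreover have "\<psi> (s0 - d) + \<psi> (s0 + d) \<le> 2 * \<psi> s0"
    using mid[of "s0 - d" "s0 + d"] d by simp
  ultimately show False
    by linarith
qed

lemma midpoint_concave_above_chord:
  fixes \<phi> :: "real \<Rightarrow> real"
  assumes cont: "continuous_on {x..z} \<phi>"
    and mid: "\<And>s r. x \<le> s \<Longrightarrow> s \<le> r \<Longrightarrow> r \<le> z \<Longrightarrow> \<phi> s + \<phi> r \<le> 2 * \<phi> ((s + r) / 2)"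
    and "x < z" "y \<in> {x..z}"
  shows "\<phi> x + (\<phi> z - \<phi> x) * (y - x) / (z - x) \<le> \<phi> y"
proof -
  define c where "c = (\<phi> z - \<phi> x) / (z - x)"
  define \<psi> where "\<psi> s = \<phi> s - \<phi> x - c * (s - x)" for s
  have "0 \<le> \<psi> y"
  proof (rule midpoint_concave_nonneg_if_zero_at_ends[where \<psi> = \<psi> and x = x and z = z])
    show "continuous_on {x..z} \<psi>"
      unfolding \<psi>_def by (intro continuous_intros cont)
    show "\<psi> s + \<psi> r \<le> 2 * \<psi> ((s + r) / 2)" if "x \<le> s" "s \<le> r" "r \<le> z" for s r
    proof -
      have "\<psi> s + \<psi> r - 2 * \<psi> ((s + r) / 2) = \<phi> s + \<phi> r - 2 * \<phi> ((s + r) / 2)"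
        unfolding \<psi>_def by (simp add: algebra_simps)
      then show ?thesis
        using mid[OF that] by linarith
    qed
    show "\<psi> x = 0" "\<psi> z = 0"
      unfolding \<psi>_def c_def using \<open>x < z\<close> by auto
  qed fact
  then show ?thesis
    unfolding \<psi>_def c_def by (simp add: algebra_simps)
qed

lemma concave_on_Icc_if_midpoint_concave:
  fixes \<phi> :: "real \<Rightarrow> real"
  assumes cont: "continuous_on {a..b} \<phi>"
    and mid: "\<And>s r. a \<le> s \<Longrightarrow> s \<le> r \<Longrightarrow> r \<le> b \<Longrightarrow> \<phi> s + \<phi> r \<le> 2 * \<phi> ((s + r) / 2)"
  shows "concave_on {a..b} \<phi>"
proof (rule concave_on_linorderI)
  fix t x y :: real
  assume t: "0 < t" "t < 1" and xy: "x \<in> {a..b}" "y \<in> {a..b}" "x < y"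
  have chord: "\<phi> x + (\<phi> y - \<phi> x) * (((1 - t) * x + t * y) - x) / (y - x) \<le> \<phi> ((1 - t) * x + t * y)"
  proof (rule midpoint_concave_above_chord)
    show "continuous_on {x..y} \<phi>"
      using cont by (rule continuous_on_subset) (use xy in auto)
    have "t * (y - x) \<le> y - x" "0 \<le> t * (y - x)"
      using t xy by (auto intro: mult_left_le_one_le)
    then show "(1 - t) * x + t * y \<in> {x..y}"
      by (simp add: algebra_simps)
  qed (use mid xy in auto)
  have "(\<phi> y - \<phi> x) * (((1 - t) * x + t * y) - x) / (y - x) = t * (\<phi> y - \<phi> x)"
    using xy by (simp add: field_simps)
  with chord show "(1 - t) * \<phi> x + t * \<phi> y \<le> \<phi> ((1 - t) *\<^sub>R x + t *\<^sub>R y)"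
    by (simp add: algebra_simps)
qed simp

lemma concave_on_Icc_if_increments_antimono:
  fixes F :: "real \<Rightarrow> real"
  assumes "continuous_on {a..b} F"
    and increments: "\<And>s t \<delta>. a \<le> s \<Longrightarrow> s \<le> t \<Longrightarrow> 0 \<le> \<delta> \<Longrightarrow> t + \<delta> \<le> b \<Longrightarrow>
                       F (t + \<delta>) - F t \<le> F (s + \<delta>) - F s"
  shows "concave_on {a..b} F"
proof (rule concave_on_Icc_if_midpoint_concave[OF assms(1)])
  fix s r assume "a \<le> s" "s \<le> r" "r \<le> b"
  then have "F ((s + r) / 2 + (r - s) / 2) - F ((s + r) / 2) \<le> F (s + (r - s) / 2) - F s"
    by (intro increments) (auto simp: field_simps)
  moreover have "(s + r) / 2 + (r - s) / 2 = r" "s + (r - s) / 2 = (s + r) / 2"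
    by (simp_all add: field_simps)
  ultimately show "F s + F r \<le> 2 * F ((s + r) / 2)"
    by simp
qed

lemma lipschitz_on_Icc_if_increments_antimono:
  fixes F :: "real \<Rightarrow> real"
  assumes "a < b" and mono: "mono_on {a..b} F"
    and increments: "\<And>s t \<delta>. a \<le> s \<Longrightarrow> s \<le> t \<Longrightarrow> 0 \<le> \<delta> \<Longrightarrow> t + \<delta> \<le> b \<Longrightarrow>
                       F (t + \<delta>) - F t \<le> F (s + \<delta>) - F s"
    and start: "\<And>\<delta>. 0 < \<delta> \<Longrightarrow> a + \<delta> \<le> b \<Longrightarrow> F (a + \<delta>) - F a \<le> K * \<delta>"
  shows "K-lipschitz_on {a..b} F"
proof -
  have increment_le: "F t - F s \<le> K * (t - s)" if "a \<le> s" "s \<le> t" "t \<le> b" for s t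
    using increments[of a s "t - s"] start[of "t - s"] that by (cases "s = t") simp_all
  have monoD: "F s \<le> F t" if "a \<le> s" "s \<le> t" "t \<le> b" for s t
    using mono_onD[OF mono, of s t] that by simp
  have "0 \<le> K * (b - a)"
    using increment_le[of a b] monoD[of a b] \<open>a < b\<close> by simp
  then have "0 \<le> K"
    using \<open>a < b\<close> by (simp add: zero_le_mult_iff)
  moreover have "dist (F x) (F y) \<le> K * dist x y" if "x \<in> {a..b}" "y \<in> {a..b}" for x y
    using increment_le[of x y] monoD[of x y] increment_le[of y x] monoD[of y x] that
    by (cases "x \<le> y") (simp_all add: dist_real_def abs_if)
  ultimately show ?thesis
    by (intro lipschitz_onI)
qed

lemma one_minus_power_div_le:
  fixes u :: real
  assumes "0 \<le> u" "u \<le> 1"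
  shows "(1 - (1 - u) ^ n) / real n \<le> u"
proof (cases "n = 0")
  case False
  have "1 + real n * (- u) \<le> (1 + - u) ^ n"
    using assms by (intro Bernoulli_inequality) simp
  then show ?thesis
    using False by (simp add: divide_le_eq algebra_simps)
qed (use assms in simp)

lemma slope_between_supergradients:
  fixes F D :: "real \<Rightarrow> real"
  assumes super: "\<And>s t. s \<in> {a..b} \<Longrightarrow> t \<in> {a..b} \<Longrightarrow> F s \<le> F t + D t * (s - t)"
    and "s \<in> {a..b}" "r \<in> {a..b}" "s < r"
  shows "D r \<le> slope F s r" "slope F s r \<le> D s"
proof -
  have "D r * (r - s) \<le> F r - F s" "F r - F s \<le> D s * (r - s)"
    using super[of s r] super[of r s] assms(2-4) by (auto simp: right_diff_distrib)
  then show "D r \<le> slope F s r" "slope F s r \<le> D s"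
    using \<open>s < r\<close> by (simp_all add: slope_def pos_le_divide_eq pos_divide_le_eq)
qed

lemma supergradient_antimono:
  fixes F D :: "real \<Rightarrow> real"
  assumes super: "\<And>s t. s \<in> {a..b} \<Longrightarrow> t \<in> {a..b} \<Longrightarrow> F s \<le> F t + D t * (s - t)"
    and "s \<in> {a..b}" "t \<in> {a..b}" "s \<le> t"
  shows "D t \<le> D s"
proof (cases "s = t")
  case False
  then show ?thesis
    using slope_between_supergradients[OF super assms(2,3)] \<open>s \<le> t\<close> by force
qed simp

lemma has_real_derivative_if_continuous_supergradient:
  fixes F D :: "real \<Rightarrow> real"
  assumes super: "\<And>s t. s \<in> {a..b} \<Longrightarrow> t \<in> {a..b} \<Longrightarrow> F s \<le> F t + D t * (s - t)"
    and cont: "continuous_on {a..b} D" and t: "t \<in> {a..b}"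
  shows "(F has_real_derivative D t) (at t within {a..b})"
proof -
  have between: "min (D t) (D y) \<le> slope F t y \<and> slope F t y \<le> max (D t) (D y)"
    if "y \<in> {a..b}" "y \<noteq> t" for y
    using slope_between_supergradients[OF super t that(1)] slope_between_supergradients[OF super that(1) t]
      that(2) by (cases "t < y") (auto simp: slope_commute[of F y t] min_le_iff_disj le_max_iff_disj)
  have D: "(D \<longlongrightarrow> D t) (at t within {a..b})"
    using cont t by (simp add: continuous_on_def)
  have "((\<lambda>y. slope F t y) \<longlongrightarrow> D t) (at t within {a..b})"
  proof (rule tendsto_sandwich)
    show "\<forall>\<^sub>F y in at t within {a..b}. min (D t) (D y) \<le> slope F t y"
      "\<forall>\<^sub>F y in at t within {a..b}. slope F t y \<le> max (D t) (D y)"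
      using between by (auto simp: eventually_at_filter)
    show "((\<lambda>y. min (D t) (D y)) \<longlongrightarrow> D t) (at t within {a..b})"
      using tendsto_min[OF tendsto_const[of "D t"] D] by simp
    show "((\<lambda>y. max (D t) (D y)) \<longlongrightarrow> D t) (at t within {a..b})"
      using tendsto_max[OF tendsto_const[of "D t"] D] by simp
  qed
  then show ?thesis
    by (simp add: has_field_derivative_iff slope_def)
qed

lemma continuous_on_Icc_if_antimono_without_jumps:
  fixes D :: "real \<Rightarrow> real"
  assumes antimono: "\<And>s t. a \<le> s \<Longrightarrow> s \<le> t \<Longrightarrow> t \<le> b \<Longrightarrow> D t \<le> D s"
    and right: "\<And>t e. a \<le> t \<Longrightarrow> t < b \<Longrightarrow> 0 < e \<Longrightarrow> \<exists>y\<in>{t<..b}. D t - e < D y"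
    and left: "\<And>t e. a < t \<Longrightarrow> t \<le> b \<Longrightarrow> 0 < e \<Longrightarrow> \<exists>y\<in>{a..<t}. D y < D t + e"
  shows "continuous_on {a..b} D"
  unfolding continuous_on_def
proof (intro ballI order_tendstoI)
  fix t c assume t: "t \<in> {a..b}"
  show "\<forall>\<^sub>F y in at t within {a..b}. c < D y" if "c < D t"
  proof -
    obtain y where "t < y" "\<And>y'. y' \<in> {a..b} \<Longrightarrow> y' < y \<Longrightarrow> c < D y'"
    proof (cases "t < b")
      case True
      then obtain y where "y \<in> {t<..b}" "c < D y"
        using right[of t "D t - c"] t \<open>c < D t\<close> by auto
      then show ?thesis
        by (intro that[of y]) (auto intro: less_le_trans[OF _ antimono])
    next
      case False
      then show ?thesis
        using t \<open>c < D t\<close> by (intro that[of "t + 1"]) (auto intro: less_le_trans[OF _ antimono])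
    qed
    then show ?thesis
      unfolding eventually_at by (intro exI[of _ "y - t"]) (auto simp: dist_real_def abs_less_iff)
  qed
  show "\<forall>\<^sub>F y in at t within {a..b}. D y < c" if "D t < c"
  proof -
    obtain y where "y < t" "\<And>y'. y' \<in> {a..b} \<Longrightarrow> y < y' \<Longrightarrow> D y' < c"
    proof (cases "a < t")
      case True
      then obtain y where "y \<in> {a..<t}" "D y < c"
        using left[of t "c - D t"] t \<open>D t < c\<close> by auto
      then show ?thesis
        by (intro that[of y]) (auto intro: le_less_trans[OF antimono])
    next
      case False
      then show ?thesis
        using t \<open>D t < c\<close> by (intro that[of "t - 1"]) (auto intro: le_less_trans[OF antimono])
    qed
    then show ?thesis
      unfolding eventually_at by (intro exI[of _ "t - y"]) (auto simp: dist_real_def abs_less_iff)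
  qed
qed

lemma eventually_at_within_imp_ex_in_interval:
  fixes u v t :: real
  assumes ev: "eventually P (at t within S)" and sub: "{u<..<v} \<subseteq> S" and t: "t \<in> {u..v}" "u < v"
  shows "\<exists>y\<in>{u<..<v}. P y"
proof -
  obtain d where d: "0 < d" "\<And>y. y \<in> S \<Longrightarrow> y \<noteq> t \<Longrightarrow> dist y t < d \<Longrightarrow> P y"
    using ev unfolding eventually_at by blast
  obtain y where "y \<in> {u<..<v}" "y \<noteq> t" "dist y t < d"
  proof (cases "t < v")
    case True
    define m where "m = min d (v - t)"
    have "0 < m" "m \<le> d" "m \<le> v - t"
      using True d(1) unfolding m_def by auto
    then show ?thesis
      using t by (intro that[of "t + m / 2"]) (auto simp: dist_real_def)
  next
    case False
    define m where "m = min d (v - u)"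
    have "0 < m" "m \<le> d" "m \<le> v - u"
      using t d(1) unfolding m_def by auto
    then show ?thesis
      using t False by (intro that[of "t - m / 2"]) (auto simp: dist_real_def)
  qed
  then show ?thesis
    using d(2) sub by blast
qed

definition concave_deriv :: "(real \<Rightarrow> real) \<Rightarrow> real \<Rightarrow> real \<Rightarrow> real \<Rightarrow> real" where
  "concave_deriv F a b t =
     (if t < b then Sup (slope F t ` {t<..b}) else Inf ((\<lambda>s. slope F s t) ` {a..<t}))"

context
  fixes F :: "real \<Rightarrow> real" and a b :: real
  assumes concave: "concave_on {a..b} F"
    and right_slopes_bdd: "bdd_above (slope F a ` {a<..b})"
    and left_slopes_bdd: "bdd_below ((\<lambda>s. slope F s b) ` {a..<b})"
begin

lemma bdd_above_right_slopes: "a \<le> t \<Longrightarrow> bdd_above (slope F t ` {t<..b})"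
proof (cases "a = t")
  case False
  assume "a \<le> t"
  obtain M where M: "\<And>r. r \<in> {a<..b} \<Longrightarrow> slope F a r \<le> M"
    using right_slopes_bdd unfolding bdd_above_def by blast
  have "slope F t r \<le> M" if "r \<in> {t<..b}" for r
    using concave_on_slope_le(2)[OF concave, of a r t] M[of r] False \<open>a \<le> t\<close> that by force
  then show ?thesis
    by (rule bdd_aboveI2)
qed (use right_slopes_bdd in simp)

lemma slope_le_concave_deriv: "a \<le> t \<Longrightarrow> t < r \<Longrightarrow> r \<le> b \<Longrightarrow> slope F t r \<le> concave_deriv F a b t"
  unfolding concave_deriv_def using bdd_above_right_slopes[of t] by (auto intro: cSup_upper)

lemma concave_deriv_le_slope:
  assumes "a \<le> s" "s < t" "t \<le> b"
  shows "concave_deriv F a b t \<le> slope F s t"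
proof (cases "t < b")
  case True
  have "slope F t r \<le> slope F s t" if "r \<in> {t<..b}" for r
    using concave_on_slope_le[OF concave, of s r t] assms that by force
  then show ?thesis
    unfolding concave_deriv_def using True by (auto intro: cSup_least)
next
  case False
  then show ?thesis
    unfolding concave_deriv_def using assms left_slopes_bdd by (auto intro: cInf_lower)
qed

lemma concave_deriv_supergradient:
  assumes "s \<in> {a..b}" "t \<in> {a..b}"
  shows "F s \<le> F t + concave_deriv F a b t * (s - t)"
proof (cases s t rule: linorder_cases)
  case less
  then have "concave_deriv F a b t * (t - s) \<le> F t - F s"
    using concave_deriv_le_slope[of s t] assms by (simp add: slope_def pos_le_divide_eq)
  then show ?thesis
    by (simp add: right_diff_distrib)
next
  case greater
  then have "F s - F t \<le> concave_deriv F a b t * (s - t)"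
    using slope_le_concave_deriv[of t s] assms by (simp add: slope_def pos_divide_le_eq)
  then show ?thesis
    by simp
qed simp

lemma concave_deriv_right_approx:
  assumes "a \<le> t" "t < b" "0 < e"
  shows "\<exists>r\<in>{t<..b}. concave_deriv F a b t - e < slope F t r"
proof -
  have "concave_deriv F a b t - e < Sup (slope F t ` {t<..b})"
    using assms unfolding concave_deriv_def by simp
  then show ?thesis
    using less_cSup_iff[OF _ bdd_above_right_slopes[OF \<open>a \<le> t\<close>]] assms by auto
qed

lemma concave_deriv_left_approx:
  assumes no_kink: "a < t \<Longrightarrow> t < b \<Longrightarrow> \<exists>K. \<forall>\<delta>. 0 < \<delta> \<longrightarrow> \<delta> < t - a \<longrightarrow> \<delta> < b - t \<longrightarrow>
                        F t - F (t - \<delta>) \<le> F (t + \<delta>) - F t + K * \<delta>\<^sup>2"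
    and t: "a < t" "t \<le> b" and "0 < e"
  shows "\<exists>s\<in>{a..<t}. slope F s t < concave_deriv F a b t + e"
proof (cases "t < b")
  case False
  then have "Inf ((\<lambda>s. slope F s b) ` {a..<b}) < concave_deriv F a b t + e"
    using t \<open>0 < e\<close> unfolding concave_deriv_def by simp
  then show ?thesis
    using cInf_less_iff[OF _ left_slopes_bdd] t False by auto
next
  case True
  obtain K where K: "\<And>\<delta>. 0 < \<delta> \<Longrightarrow> \<delta> < t - a \<Longrightarrow> \<delta> < b - t \<Longrightarrow>
                       F t - F (t - \<delta>) \<le> F (t + \<delta>) - F t + K * \<delta>\<^sup>2"
    using no_kink t True by blast
  define \<delta> where "\<delta> = min (min ((t - a) / 2) ((b - t) / 2)) (e / (2 * (\<bar>K\<bar> + 1)))"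
  have \<delta>_le: "\<delta> \<le> (t - a) / 2" "\<delta> \<le> (b - t) / 2" "\<delta> \<le> e / (2 * (\<bar>K\<bar> + 1))"
    unfolding \<delta>_def min_le_iff_disj by simp_all
  have "0 < \<delta>"
    using t True \<open>0 < e\<close> unfolding \<delta>_def by simp
  with \<delta>_le t True have \<delta>: "0 < \<delta>" "\<delta> < t - a" "\<delta> < b - t"
    by auto
  have "\<bar>K\<bar> * \<delta> \<le> \<bar>K\<bar> * (e / (2 * (\<bar>K\<bar> + 1)))"
    using \<delta>_le(3) by (rule mult_left_mono) simp
  also have "\<dots> < e"
    using \<open>0 < e\<close> by (simp add: field_simps add_nonneg_pos)
  finally have "K * \<delta> < e"
    using mult_right_mono[OF abs_ge_self[of K], of \<delta>] \<open>0 < \<delta>\<close> by linarith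
  have "slope F (t - \<delta>) t = (F t - F (t - \<delta>)) / \<delta>"
    by (simp add: slope_def)
  also have "\<dots> \<le> (F (t + \<delta>) - F t + K * \<delta>\<^sup>2) / \<delta>"
    using K[OF \<delta>] by (rule divide_right_mono) (use \<delta> in simp)
  also have "\<dots> = slope F t (t + \<delta>) + K * \<delta>"
    using \<delta>(1) by (simp add: slope_def field_simps power2_eq_square)
  also have "\<dots> < concave_deriv F a b t + e"
    using slope_le_concave_deriv[of t "t + \<delta>"] \<open>K * \<delta> < e\<close> t \<delta> by simp
  finally show ?thesis
    using \<delta> by (intro bexI[of _ "t - \<delta>"]) auto
qed

context
  assumes cont: "continuous_on {a..b} F"
begin

lemma concave_deriv_without_jump_right:
  assumes t: "a \<le> t" "t < b" and "0 < e"
  shows "\<exists>y\<in>{t<..b}. concave_deriv F a b t - e < concave_deriv F a b y"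
proof -
  obtain r where r: "r \<in> {t<..b}" "concave_deriv F a b t - e / 2 < slope F t r"
    using concave_deriv_right_approx[of t "e / 2"] t \<open>0 < e\<close> by auto
  have "((\<lambda>y. slope F r y) \<longlongrightarrow> slope F r t) (at t within {a..b})"
    using r t by (intro tendsto_slope cont) auto
  then have "\<forall>\<^sub>F y in at t within {a..b}. concave_deriv F a b t - e < slope F y r"
    unfolding slope_commute[of F r] by (rule order_tendstoD) (use r \<open>0 < e\<close> in auto)
  then have "\<exists>y\<in>{t<..<r}. concave_deriv F a b t - e < slope F y r"
    by (rule eventually_at_within_imp_ex_in_interval) (use r t in auto)
  then obtain y where "y \<in> {t<..<r}" "concave_deriv F a b t - e < slope F y r"
    by blast
  then show ?thesis
    using slope_le_concave_deriv[of y r] r t by (intro bexI[of _ y]) auto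
qed

lemma concave_deriv_without_jump_left:
  assumes no_kink: "\<And>t. a < t \<Longrightarrow> t < b \<Longrightarrow> \<exists>K. \<forall>\<delta>. 0 < \<delta> \<longrightarrow> \<delta> < t - a \<longrightarrow> \<delta> < b - t \<longrightarrow>
                        F t - F (t - \<delta>) \<le> F (t + \<delta>) - F t + K * \<delta>\<^sup>2"
    and t: "a < t" "t \<le> b" and "0 < e"
  shows "\<exists>y\<in>{a..<t}. concave_deriv F a b y < concave_deriv F a b t + e"
proof -
  obtain s where s: "s \<in> {a..<t}" "slope F s t < concave_deriv F a b t + e / 2"
    using concave_deriv_left_approx[OF no_kink t, of "e / 2"] \<open>0 < e\<close> by auto
  have "((\<lambda>y. slope F s y) \<longlongrightarrow> slope F s t) (at t within {a..b})"
    using s t by (intro tendsto_slope cont) auto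
  then have "\<forall>\<^sub>F y in at t within {a..b}. slope F s y < concave_deriv F a b t + e"
    by (rule order_tendstoD) (use s \<open>0 < e\<close> in auto)
  then have "\<exists>y\<in>{s<..<t}. slope F s y < concave_deriv F a b t + e"
    by (rule eventually_at_within_imp_ex_in_interval) (use s t in auto)
  then obtain y where "y \<in> {s<..<t}" "slope F s y < concave_deriv F a b t + e"
    by blast
  then show ?thesis
    using concave_deriv_le_slope[of s y] s t by (intro bexI[of _ y]) auto
qed

end

end

lemma concave_continuously_differentiable_if_increments_antimono:
  fixes F :: "real \<Rightarrow> real"
  assumes "a < b" and mono: "mono_on {a..b} F"
    and increments: "\<And>s t \<delta>. a \<le> s \<Longrightarrow> s \<le> t \<Longrightarrow> 0 \<le> \<delta> \<Longrightarrow> t + \<delta> \<le> b \<Longrightarrow>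
                       F (t + \<delta>) - F t \<le> F (s + \<delta>) - F s"
    and start: "\<And>\<delta>. 0 < \<delta> \<Longrightarrow> a + \<delta> \<le> b \<Longrightarrow> F (a + \<delta>) - F a \<le> K * \<delta>"
    and no_kink: "\<And>t. a < t \<Longrightarrow> t < b \<Longrightarrow> \<exists>K. \<forall>\<delta>. 0 < \<delta> \<longrightarrow> \<delta> < t - a \<longrightarrow> \<delta> < b - t \<longrightarrow>
                        F t - F (t - \<delta>) \<le> F (t + \<delta>) - F t + K * \<delta>\<^sup>2"
  shows "(\<exists>D. (\<forall>t\<in>{a..b}. (F has_real_derivative D t) (at t within {a..b}))
             \<and> continuous_on {a..b} D \<and> (\<forall>s\<in>{a..b}. \<forall>t\<in>{a..b}. s \<le> t \<longrightarrow> D t \<le> D s))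
         \<and> concave_on {a..b} F"
proof -
  have cont: "continuous_on {a..b} F"
    using lipschitz_on_Icc_if_increments_antimono[OF assms(1-4)] by (rule lipschitz_on_continuous_on)
  have concave: "concave_on {a..b} F"
    using cont increments by (rule concave_on_Icc_if_increments_antimono)
  have "slope F a r \<le> K" if "r \<in> {a<..b}" for r
    using start[of "r - a"] that by (simp add: slope_def pos_divide_le_eq)
  then have right_bdd: "bdd_above (slope F a ` {a<..b})"
    by (rule bdd_aboveI2)
  have left_bdd: "bdd_below ((\<lambda>s. slope F s b) ` {a..<b})"
    using mono_onD[OF mono] by (intro bdd_belowI2[where m = 0]) (auto simp: slope_def)
  define D where "D = concave_deriv F a b"
  have super: "F s \<le> F t + D t * (s - t)" if "s \<in> {a..b}" "t \<in> {a..b}" for s t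
    unfolding D_def using concave_deriv_supergradient[OF concave right_bdd left_bdd] that .
  have antimono: "D t \<le> D s" if "a \<le> s" "s \<le> t" "t \<le> b" for s t
    using supergradient_antimono[OF super] that by simp
  have "continuous_on {a..b} D"
    unfolding D_def using antimono[unfolded D_def]
      concave_deriv_without_jump_right[OF concave right_bdd left_bdd cont]
      concave_deriv_without_jump_left[OF concave right_bdd left_bdd cont no_kink]
    by (rule continuous_on_Icc_if_antimono_without_jumps)
  moreover have "(F has_real_derivative D t) (at t within {a..b})" if "t \<in> {a..b}" for t
    using has_real_derivative_if_continuous_supergradient[of a b F D t] super \<open>continuous_on {a..b} D\<close> that
    by blast
  ultimately show ?thesis
    using antimono concave by (intro conjI exI[of _ D]) auto
qed

definition slab :: "'a::euclidean_space \<Rightarrow> real \<Rightarrow> real \<Rightarrow> 'a set" where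
  "slab u \<alpha> w = {y. \<alpha> < u \<bullet> y \<and> u \<bullet> y \<le> \<alpha> + w}"

lemma slab_in_sets_lebesgue: "slab u \<alpha> w \<in> sets lebesgue"
proof -
  have "slab u \<alpha> w = {y. \<alpha> < u \<bullet> y} \<inter> {y. u \<bullet> y \<le> \<alpha> + w}"
    by (auto simp: slab_def)
  moreover have "{y. \<alpha> < u \<bullet> y} \<in> sets borel" "{y. u \<bullet> y \<le> \<alpha> + w} \<in> sets borel"
    by (auto intro: borel_open borel_closed open_halfspace_gt closed_halfspace_le)
  ultimately show ?thesis
    by (metis sets.Int sets_completionI_sets sets_lborel)
qed

lemma card_mult_measure_le_if_disjoint_translates:
  fixes S :: "'a::euclidean_space set" and f :: "'i \<Rightarrow> 'a"
  assumes S: "S \<in> lmeasurable" "S \<subseteq> cball 0 R" and "finite I"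
    and bound: "\<And>i. i \<in> I \<Longrightarrow> norm (f i) \<le> B"
    and disjoint: "disjoint_family_on (\<lambda>i. (+) (f i) ` S) I"
  shows "real (card I) * measure lebesgue S \<le> measure lebesgue (cball (0::'a) (R + B))"
proof -
  have translate: "(+) (f i) ` S \<in> lmeasurable" for i
    using measurable_translation[OF S(1)] .
  have "real (card I) * measure lebesgue S = (\<Sum>i\<in>I. measure lebesgue ((+) (f i) ` S))"
    by (simp add: measure_translation)
  also have "\<dots> = measure lebesgue (\<Union>i\<in>I. (+) (f i) ` S)"
  proof (rule measure_finite_Union[symmetric])
    show "(\<lambda>i. (+) (f i) ` S) ` I \<subseteq> sets lebesgue"
      using translate by auto
    show "emeasure lebesgue ((+) (f i) ` S) \<noteq> \<infinity>" for i
      using fmeasurableD2[OF translate] by simp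
  qed (use \<open>finite I\<close> disjoint in auto)
  also have "\<dots> \<le> measure lebesgue (cball (0::'a) (R + B))"
  proof (rule measure_mono_fmeasurable)
    show "(\<Union>i\<in>I. (+) (f i) ` S) \<subseteq> cball 0 (R + B)"
    proof clarify
      fix i y assume "i \<in> I" "y \<in> S"
      have "norm (f i + y) \<le> norm (f i) + norm y"
        by (rule norm_triangle_ineq)
      also have "\<dots> \<le> R + B"
        using bound[OF \<open>i \<in> I\<close>] S(2) \<open>y \<in> S\<close> by auto
      finally show "f i + y \<in> cball 0 (R + B)"
        by simp
    qed
    show "(\<Union>i\<in>I. (+) (f i) ` S) \<in> sets lebesgue"
      using translate \<open>finite I\<close> by (intro sets.finite_UN) (auto simp: fmeasurable_def)
  qed simp
  finally show ?thesis .
qed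

lemma translates_of_slab_disjoint:
  assumes "S \<subseteq> slab u \<alpha> w" "0 < w" "u \<bullet> d = real k * w" "u \<bullet> d' = real k' * w" "k \<noteq> k'"
  shows "(+) d ` S \<inter> (+) d' ` S = {}"
proof (rule ccontr)
  assume "(+) d ` S \<inter> (+) d' ` S \<noteq> {}"
  then obtain y y' where "y \<in> S" "y' \<in> S" "d + y = d' + y'"
    by auto
  then have "u \<bullet> (d + y) = u \<bullet> (d' + y')" "y \<in> slab u \<alpha> w" "y' \<in> slab u \<alpha> w"
    using assms(1) by auto
  then have "real k * w < (real k' + 1) * w" "real k' * w < (real k + 1) * w"
    using assms(3,4) by (auto simp: slab_def inner_add_right algebra_simps)
  then have "real k < real k' + 1" "real k' < real k + 1"
    using \<open>0 < w\<close> by (simp_all only: mult_less_cancel_right_pos)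
  then show False
    using \<open>k \<noteq> k'\<close> by linarith
qed

lemma exists_nat_grid_size:
  fixes w :: real
  assumes "0 < w"
  obtains N :: nat where "0 < N" "\<And>k. k < N \<Longrightarrow> real k * w \<le> 1" "1 \<le> real N * w"
proof
  define N where "N = nat \<lfloor>1 / w\<rfloor> + 1"
  have N: "real N = of_int \<lfloor>1 / w\<rfloor> + 1"
    unfolding N_def using assms by simp
  show "0 < N"
    unfolding N_def by simp
  show "real k * w \<le> 1" if "k < N" for k
  proof -
    have "real k \<le> 1 / w"
      using that N by linarith
    then show ?thesis
      using assms by (simp add: le_divide_eq)
  qed
  have "1 / w \<le> real N"
    using N by linarith
  then show "1 \<le> real N * w"
    using assms by (simp add: divide_le_eq)
qed

lemma measure_slab_le:
  fixes u e :: "'a::euclidean_space"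
  assumes ue: "u \<bullet> e = 1" and "0 < w"
  shows "measure lebesgue (cball 0 R \<inter> slab u \<alpha> w) \<le> measure lebesgue (cball (0::'a) (R + norm e)) * w"
proof -
  define S where "S = cball (0::'a) R \<inter> slab u \<alpha> w"
  define V where "V = measure lebesgue (cball (0::'a) (R + norm e))"
  have S: "S \<in> lmeasurable" "S \<subseteq> cball 0 R"
    unfolding S_def by (auto intro: fmeasurable_Int_fmeasurable slab_in_sets_lebesgue)
  obtain N :: nat where N: "0 < N" "\<And>k. k < N \<Longrightarrow> real k * w \<le> 1" "1 \<le> real N * w"
    using exists_nat_grid_size[OF \<open>0 < w\<close>] by blast
  have "real (card {..<N}) * measure lebesgue S \<le> V"
    unfolding V_def
  proof (rule card_mult_measure_le_if_disjoint_translates[OF S finite_lessThan])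
    show "norm ((real k * w) *\<^sub>R e) \<le> norm e" if "k \<in> {..<N}" for k
      using N(2)[of k] that \<open>0 < w\<close> by (simp add: mult_left_le_one_le)
    show "disjoint_family_on (\<lambda>k. (+) ((real k * w) *\<^sub>R e) ` S) {..<N}"
      unfolding disjoint_family_on_def S_def
      using translates_of_slab_disjoint[of S u \<alpha> w] \<open>0 < w\<close> ue by (auto simp: S_def)
  qed
  then have "measure lebesgue S \<le> V / real N"
    using N(1) by (simp add: field_simps)
  also have "\<dots> \<le> V * w"
  proof -
    have "V * 1 \<le> V * (real N * w)"
      using N(3) by (rule mult_left_mono) (simp add: V_def)
    then show ?thesis
      using N(1) by (simp add: divide_le_eq algebra_simps)
  qed
  finally show ?thesis
    by (simp add: S_def V_def)
qed

lemma grid_translates_of_double_slab_disjoint: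
  assumes "S \<subseteq> slab u \<alpha> w \<inter> slab v \<beta> w" "0 < w"
    and dual: "u \<bullet> e1 = 1" "v \<bullet> e1 = 0" "u \<bullet> e2 = 0" "v \<bullet> e2 = 1"
  shows "disjoint_family_on (\<lambda>(k, l). (+) ((real k * w) *\<^sub>R e1 + (real l * w) *\<^sub>R e2) ` S) I"
  unfolding disjoint_family_on_def
proof (intro ballI impI)
  fix i j :: "nat \<times> nat" assume "i \<noteq> j"
  obtain k l k' l' where ij: "i = (k, l)" "j = (k', l')"
    by fastforce
  then consider "k \<noteq> k'" | "l \<noteq> l'"
    using \<open>i \<noteq> j\<close> by auto
  then show "(case i of (k, l) \<Rightarrow> (+) ((real k * w) *\<^sub>R e1 + (real l * w) *\<^sub>R e2) ` S) \<inter>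
             (case j of (k, l) \<Rightarrow> (+) ((real k * w) *\<^sub>R e1 + (real l * w) *\<^sub>R e2) ` S) = {}"
  proof cases
    case 1
    show ?thesis
      unfolding ij prod.case by (rule translates_of_slab_disjoint[of S u \<alpha> w, OF _ \<open>0 < w\<close> _ _ 1])
        (use assms in \<open>auto simp: inner_add_right\<close>)
  next
    case 2
    show ?thesis
      unfolding ij prod.case by (rule translates_of_slab_disjoint[of S v \<beta> w, OF _ \<open>0 < w\<close> _ _ 2])
        (use assms in \<open>auto simp: inner_add_right\<close>)
  qed
qed

lemma measure_double_slab_le:
  fixes u v e1 e2 :: "'a::euclidean_space"
  assumes dual: "u \<bullet> e1 = 1" "v \<bullet> e1 = 0" "u \<bullet> e2 = 0" "v \<bullet> e2 = 1" and "0 < w"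
  shows "measure lebesgue (cball 0 R \<inter> slab u \<alpha> w \<inter> slab v \<beta> w)
           \<le> measure lebesgue (cball (0::'a) (R + (norm e1 + norm e2))) * w\<^sup>2"
proof -
  define S where "S = cball (0::'a) R \<inter> slab u \<alpha> w \<inter> slab v \<beta> w"
  define V where "V = measure lebesgue (cball (0::'a) (R + (norm e1 + norm e2)))"
  have S: "S \<in> lmeasurable" "S \<subseteq> cball 0 R"
    unfolding S_def by (auto intro!: fmeasurable_Int_fmeasurable slab_in_sets_lebesgue)
  obtain N :: nat where N: "0 < N" "\<And>k. k < N \<Longrightarrow> real k * w \<le> 1" "1 \<le> real N * w"
    using exists_nat_grid_size[OF \<open>0 < w\<close>] by blast
  have "real (card ({..<N} \<times> {..<N})) * measure lebesgue S \<le> V"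
    unfolding V_def
  proof (rule card_mult_measure_le_if_disjoint_translates[OF S])
    show "norm (case i of (k, l) \<Rightarrow> (real k * w) *\<^sub>R e1 + (real l * w) *\<^sub>R e2) \<le> norm e1 + norm e2"
      if "i \<in> {..<N} \<times> {..<N}" for i
      using that N(2) \<open>0 < w\<close> by (auto intro!: norm_triangle_le add_mono simp: mult_left_le_one_le)
    show "disjoint_family_on (\<lambda>i. (+) (case i of (k, l) \<Rightarrow> (real k * w) *\<^sub>R e1 + (real l * w) *\<^sub>R e2) ` S)
            ({..<N} \<times> {..<N})"
      using grid_translates_of_double_slab_disjoint[OF _ \<open>0 < w\<close> dual, of S]
      unfolding S_def case_prod_unfold by blast
  qed simp
  then have "measure lebesgue S \<le> V / (real N)\<^sup>2"
    using N(1) by (simp add: field_simps power2_eq_square)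
  also have "\<dots> \<le> V * w\<^sup>2"
  proof -
    have "V * 1 \<le> V * (real N * w)\<^sup>2"
      using one_le_power[OF N(3)] by (rule mult_left_mono) (simp add: V_def)
    then show ?thesis
      using N(1) by (simp add: divide_le_eq power_mult_distrib algebra_simps)
  qed
  finally show ?thesis
    by (simp add: S_def V_def)
qed

lemma exists_dual_pair:
  fixes u v :: "'a::real_inner"
  assumes "(u \<bullet> v)\<^sup>2 < (u \<bullet> u) * (v \<bullet> v)"
  obtains e1 e2 where "u \<bullet> e1 = 1" "v \<bullet> e1 = 0" "u \<bullet> e2 = 0" "v \<bullet> e2 = 1"
proof
  define G where "G = (u \<bullet> u) * (v \<bullet> v) - (u \<bullet> v)\<^sup>2"
  have "G \<noteq> 0"
    using assms unfolding G_def by simp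
  have "u \<bullet> (((v \<bullet> v) / G) *\<^sub>R u - ((u \<bullet> v) / G) *\<^sub>R v) = ((u \<bullet> u) * (v \<bullet> v) - (u \<bullet> v)\<^sup>2) / G"
    "v \<bullet> (((u \<bullet> u) / G) *\<^sub>R v - ((u \<bullet> v) / G) *\<^sub>R u) = ((u \<bullet> u) * (v \<bullet> v) - (u \<bullet> v)\<^sup>2) / G"
    by (simp_all add: inner_diff_right diff_divide_distrib power2_eq_square inner_commute mult.commute)
  then show "u \<bullet> (((v \<bullet> v) / G) *\<^sub>R u - ((u \<bullet> v) / G) *\<^sub>R v) = 1"
    "v \<bullet> (((u \<bullet> u) / G) *\<^sub>R v - ((u \<bullet> v) / G) *\<^sub>R u) = 1"
    using \<open>G \<noteq> 0\<close> unfolding G_def[symmetric] by simp_all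
  show "v \<bullet> (((v \<bullet> v) / G) *\<^sub>R u - ((u \<bullet> v) / G) *\<^sub>R v) = 0"
    "u \<bullet> (((u \<bullet> u) / G) *\<^sub>R v - ((u \<bullet> v) / G) *\<^sub>R u) = 0"
    by (simp_all add: inner_diff_right inner_commute mult.commute)
qed

lemma closed_imp_sets_lebesgue: "closed S \<Longrightarrow> S \<in> sets lebesgue"
  by (metis borel_closed sets_completionI_sets sets_lborel)

lemma inner_unit_vectors_square_less_one:
  fixes a b :: "'a::real_inner"
  assumes "norm a = 1" "norm b = 1" "b \<noteq> a" "b \<noteq> - a"
  shows "(a \<bullet> b)\<^sup>2 < 1"
proof -
  have "\<bar>a \<bullet> b\<bar> \<le> 1"
    using Cauchy_Schwarz_ineq2[of a b] assms by simp
  moreover have "\<bar>a \<bullet> b\<bar> \<noteq> 1"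
    using norm_cauchy_schwarz_abs_eq[of a b] assms by (auto simp: minus_equation_iff[of a])
  ultimately have "\<bar>a \<bullet> b\<bar> < 1"
    by simp
  then show ?thesis
    by (simp add: abs_square_less_1)
qed

lemma polyhedron_unit_normal_representation:
  fixes S :: "'a::euclidean_space set"
  assumes "polyhedron S"
  obtains P where "finite P" "\<And>p. p \<in> P \<Longrightarrow> norm (fst p) = 1"
    "S = {x. \<forall>p\<in>P. fst p \<bullet> x \<le> snd p}"
proof -
  obtain F where F: "finite F" "S = \<Inter>F" "\<And>h. h \<in> F \<Longrightarrow> \<exists>a b. a \<noteq> 0 \<and> h = {x. a \<bullet> x \<le> b}"
    using assms unfolding polyhedron_def by blast
  have "\<exists>p. norm (fst p) = 1 \<and> h = {x. fst p \<bullet> x \<le> snd p}" if h: "h \<in> F" for h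
  proof -
    obtain a b where "a \<noteq> 0" "h = {x. a \<bullet> x \<le> b}"
      using F(3)[OF h] by blast
    moreover have "(a /\<^sub>R norm a) \<bullet> x = (a \<bullet> x) / norm a" for x
      by (simp add: divide_inverse mult.commute)
    ultimately show ?thesis
      by (intro exI[of _ "(a /\<^sub>R norm a, b / norm a)"]) (auto simp: divide_le_cancel)
  qed
  then obtain g where "\<And>h. h \<in> F \<Longrightarrow> norm (fst (g h)) = 1 \<and> h = {x. fst (g h) \<bullet> x \<le> snd (g h)}"
    by metis
  then show thesis
    using F(1,2) by (intro that[of "g ` F"]) auto
qed

definition slack :: "'a::real_inner \<times> real \<Rightarrow> 'a \<Rightarrow> real" where
  "slack p x = snd p - fst p \<bullet> x"

lemma slack_add [simp]: "slack p (x + y) = slack p x - fst p \<bullet> y"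
  by (simp add: slack_def inner_add_right)

lemma slack_diff [simp]: "slack p (x - y) = slack p x + fst p \<bullet> y"
  by (simp add: slack_def inner_diff_right)

lemma mem_slab_iff_slack:
  "y \<in> slab (- fst p) (\<alpha> - snd p) w \<longleftrightarrow> slack p y \<in> {\<alpha><..\<alpha> + w}"
  by (auto simp: slack_def slab_def)

locale normalized_polytope =
  fixes P :: "('a::euclidean_space \<times> real) set" and \<Omega> :: "'a set"
  assumes finite_P: "finite P"
    and unit_normal: "\<And>p. p \<in> P \<Longrightarrow> norm (fst p) = 1"
    and \<Omega>_eq: "\<Omega> = {x. \<forall>p\<in>P. fst p \<bullet> x \<le> snd p}"
    and bounded_\<Omega>: "bounded \<Omega>"
    and interior_nonempty: "interior \<Omega> \<noteq> {}"
begin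

definition depth :: "'a \<Rightarrow> real" where
  "depth x = Min ((\<lambda>p. slack p x) ` P)"

definition cell :: "'a \<times> real \<Rightarrow> 'a set" where
  "cell p = {x. depth x = slack p x}"

lemma P_nonempty: "P \<noteq> {}"
  using bounded_\<Omega> not_bounded_UNIV \<Omega>_eq by auto

lemma normal_inner_self: "p \<in> P \<Longrightarrow> fst p \<bullet> fst p = 1"
  using unit_normal[of p] by (simp add: power2_norm_eq_inner[symmetric])

lemma normal_inner_bounds: "p \<in> P \<Longrightarrow> q \<in> P \<Longrightarrow> - 1 \<le> fst q \<bullet> fst p \<and> fst q \<bullet> fst p \<le> 1"
  using Cauchy_Schwarz_ineq2[of "fst q" "fst p"] unit_normal[of p] unit_normal[of q] by auto

lemma depth_le_slack: "p \<in> P \<Longrightarrow> depth x \<le> slack p x"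
  unfolding depth_def using finite_P by simp

lemma le_depth_iff: "c \<le> depth x \<longleftrightarrow> (\<forall>p\<in>P. c \<le> slack p x)"
  unfolding depth_def using finite_P P_nonempty by simp

lemma in_some_cell:
  obtains p where "p \<in> P" "x \<in> cell p"
proof -
  have "depth x \<in> (\<lambda>p. slack p x) ` P"
    unfolding depth_def using finite_P P_nonempty by (intro Min_in) auto
  then show thesis
    using that unfolding cell_def by auto
qed

lemma mem_\<Omega>_iff: "x \<in> \<Omega> \<longleftrightarrow> 0 \<le> depth x"
  unfolding le_depth_iff \<Omega>_eq slack_def by auto

lemma depth_le_add_dist: "depth x \<le> depth y + dist x y"
proof -
  obtain p where p: "p \<in> P" "y \<in> cell p"
    by (rule in_some_cell)
  have "depth x \<le> slack p y + fst p \<bullet> (y - x)"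
    using depth_le_slack[OF p(1), of x] by (simp add: slack_def inner_diff_right)
  also have "fst p \<bullet> (y - x) \<le> dist x y"
    using norm_cauchy_schwarz[of "fst p" "y - x"] unit_normal[OF p(1)] by (simp add: dist_norm norm_minus_commute)
  finally show ?thesis
    using p unfolding cell_def by simp
qed

lemma continuous_on_depth: "continuous_on A depth"
proof -
  have "dist (depth x) (depth y) \<le> 1 * dist x y" for x y
    using depth_le_add_dist[of x y] depth_le_add_dist[of y x] by (simp add: dist_real_def dist_commute abs_le_iff)
  then have "1-lipschitz_on A depth"
    by (intro lipschitz_onI) auto
  then show ?thesis
    by (rule lipschitz_on_continuous_on)
qed

lemma closed_cell: "closed (cell p)"
  unfolding cell_def slack_def by (intro closed_Collect_eq continuous_on_depth continuous_intros)

lemma closed_\<Omega>: "closed \<Omega>"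
proof -
  have "\<Omega> = {x. 0 \<le> depth x}"
    using mem_\<Omega>_iff by auto
  then show ?thesis
    using closed_Collect_le[OF continuous_on_const continuous_on_depth] by simp
qed

lemma depth_translate_along_normal:
  assumes p: "p \<in> P" "x \<in> cell p" and "0 \<le> s"
  shows "depth (x + s *\<^sub>R fst p) = depth x - s" "x + s *\<^sub>R fst p \<in> cell p"
proof -
  have "depth x - s \<le> slack q (x + s *\<^sub>R fst p)" if "q \<in> P" for q
  proof -
    have "s * (fst q \<bullet> fst p) \<le> s"
      using normal_inner_bounds[OF p(1) that] \<open>0 \<le> s\<close> mult_left_le[of _ s] by simp
    then show ?thesis
      using depth_le_slack[OF that, of x] by simp
  qed
  then have "depth x - s \<le> depth (x + s *\<^sub>R fst p)"
    by (simp add: le_depth_iff)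
  moreover have "slack p (x + s *\<^sub>R fst p) = depth x - s"
    using p normal_inner_self[OF p(1)] unfolding cell_def by simp
  ultimately show "depth (x + s *\<^sub>R fst p) = depth x - s"
    using depth_le_slack[OF p(1), of "x + s *\<^sub>R fst p"] by linarith
  then show "x + s *\<^sub>R fst p \<in> cell p"
    using \<open>slack p (x + s *\<^sub>R fst p) = depth x - s\<close> unfolding cell_def by simp
qed

lemma cball_subset_\<Omega>_iff: "0 \<le> r \<Longrightarrow> cball x r \<subseteq> \<Omega> \<longleftrightarrow> r \<le> depth x"
proof
  assume "0 \<le> r" "cball x r \<subseteq> \<Omega>"
  obtain p where p: "p \<in> P" "x \<in> cell p"
    by (rule in_some_cell)
  have "x + r *\<^sub>R fst p \<in> \<Omega>"
    using \<open>cball x r \<subseteq> \<Omega>\<close> \<open>0 \<le> r\<close> unit_normal[OF p(1)] by (auto simp: dist_norm)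
  then show "r \<le> depth x"
    using depth_translate_along_normal[OF p \<open>0 \<le> r\<close>] mem_\<Omega>_iff by simp
next
  assume "r \<le> depth x"
  show "cball x r \<subseteq> \<Omega>"
  proof
    fix z assume "z \<in> cball x r"
    then have "0 \<le> depth z"
      using depth_le_add_dist[of x z] \<open>r \<le> depth x\<close> by simp
    then show "z \<in> \<Omega>"
      by (simp add: mem_\<Omega>_iff)
  qed
qed

lemma interior_\<Omega>_iff: "x \<in> interior \<Omega> \<longleftrightarrow> 0 < depth x"
proof
  assume "x \<in> interior \<Omega>"
  then obtain e where "0 < e" "ball x e \<subseteq> \<Omega>"
    by (auto simp: mem_interior)
  moreover have "cball x (e / 2) \<subseteq> ball x e"
    using \<open>0 < e\<close> by (simp add: cball_subset_ball_iff)
  ultimately have "cball x (e / 2) \<subseteq> \<Omega>"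
    by blast
  then show "0 < depth x"
    using cball_subset_\<Omega>_iff[of "e / 2" x] \<open>0 < e\<close> by simp
next
  assume "0 < depth x"
  then have "ball x (depth x) \<subseteq> \<Omega>"
    using cball_subset_\<Omega>_iff[of "depth x" x] ball_subset_cball by auto
  then show "x \<in> interior \<Omega>"
    using \<open>0 < depth x\<close> by (auto simp: mem_interior)
qed

lemma frontier_\<Omega>_iff: "x \<in> frontier \<Omega> \<longleftrightarrow> x \<in> \<Omega> \<and> depth x = 0"
  using mem_\<Omega>_iff[of x] by (auto simp: frontier_def closure_closed[OF closed_\<Omega>] interior_\<Omega>_iff)

lemma inner_nbhd_eq: "inner_nbhd \<epsilon> \<Omega> = {x \<in> \<Omega>. depth x \<le> \<epsilon>}"
proof -
  have "(\<exists>y\<in>frontier \<Omega>. dist x y \<le> \<epsilon>) \<longleftrightarrow> depth x \<le> \<epsilon>" if "x \<in> \<Omega>" for x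
  proof
    assume "\<exists>y\<in>frontier \<Omega>. dist x y \<le> \<epsilon>"
    then obtain y where "y \<in> frontier \<Omega>" "dist x y \<le> \<epsilon>"
      by blast
    then show "depth x \<le> \<epsilon>"
      using depth_le_add_dist[of x y] frontier_\<Omega>_iff by simp
  next
    assume "depth x \<le> \<epsilon>"
    obtain p where p: "p \<in> P" "x \<in> cell p"
      by (rule in_some_cell)
    have "0 \<le> depth x"
      using that mem_\<Omega>_iff by simp
    then have "x + depth x *\<^sub>R fst p \<in> frontier \<Omega>"
      using depth_translate_along_normal[OF p] frontier_\<Omega>_iff mem_\<Omega>_iff by simp
    moreover have "dist x (x + depth x *\<^sub>R fst p) = depth x"
      using unit_normal[OF p(1)] \<open>0 \<le> depth x\<close> by (simp add: dist_norm)
    ultimately show "\<exists>y\<in>frontier \<Omega>. dist x y \<le> \<epsilon>"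
      using \<open>depth x \<le> \<epsilon>\<close> by force
  qed
  then show ?thesis
    unfolding inner_nbhd_def by auto
qed

lemma \<Omega>_subset_cball:
  obtains R where "\<Omega> \<subseteq> cball 0 R"
proof -
  obtain R where "\<forall>x\<in>\<Omega>. norm x \<le> R"
    using bounded_\<Omega> unfolding bounded_iff by blast
  then show thesis
    by (intro that[of R]) auto
qed

lemma bdd_above_inscribed_radii: "bdd_above {r. 0 \<le> r \<and> (\<exists>x. cball x r \<subseteq> \<Omega>)}"
proof -
  obtain R where R: "\<Omega> \<subseteq> cball 0 R"
    by (rule \<Omega>_subset_cball)
  have "r \<le> R" if "0 \<le> r" "cball x r \<subseteq> \<Omega>" for r x
  proof -
    have "norm x + r \<le> R"
      using subset_trans[OF that(2) R] that(1) by (auto simp: cball_subset_cball_iff)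
    then show ?thesis
      using norm_ge_zero[of x] by linarith
  qed
  then show ?thesis
    by (auto intro: bdd_aboveI[of _ R])
qed

lemma depth_le_inradius: "x \<in> \<Omega> \<Longrightarrow> depth x \<le> inradius \<Omega>"
  unfolding inradius_def
  by (rule cSup_upper[OF _ bdd_above_inscribed_radii]) (use cball_subset_\<Omega>_iff[of "depth x" x] in \<open>auto simp: mem_\<Omega>_iff\<close>)

lemma inradius_pos: "0 < inradius \<Omega>"
proof -
  obtain x where "x \<in> interior \<Omega>"
    using interior_nonempty by blast
  then have "0 < depth x" "x \<in> \<Omega>"
    using interior_\<Omega>_iff interior_subset by auto
  then show ?thesis
    using depth_le_inradius[of x] by simp
qed

lemma exists_depth_greater:
  assumes "t < inradius \<Omega>"
  obtains x where "t < depth x"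
proof -
  obtain x0 where "x0 \<in> \<Omega>"
    using interior_nonempty interior_subset by blast
  then have "0 \<in> {r. 0 \<le> r \<and> (\<exists>x. cball x r \<subseteq> \<Omega>)}"
    by auto
  then have "\<exists>r\<in>{r. 0 \<le> r \<and> (\<exists>x. cball x r \<subseteq> \<Omega>)}. t < r"
    using assms less_cSup_iff[OF _ bdd_above_inscribed_radii] unfolding inradius_def by blast
  then obtain r x where "t < r" "0 \<le> r" "cball x r \<subseteq> \<Omega>"
    by blast
  then show thesis
    using cball_subset_\<Omega>_iff[of r x] by (intro that[of x]) simp
qed

lemma opposite_facets_distance:
  assumes "p \<in> P" "q \<in> P" "fst q = - fst p"
  shows "2 * inradius \<Omega> \<le> snd p + snd q"
proof (rule ccontr)
  assume "\<not> ?thesis"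
  then obtain x where "(snd p + snd q) / 2 < depth x"
    using exists_depth_greater[of "(snd p + snd q) / 2"] by auto
  moreover have "slack p x + slack q x = snd p + snd q"
    using assms(3) by (simp add: slack_def)
  ultimately show False
    using depth_le_slack[OF assms(1), of x] depth_le_slack[OF assms(2), of x] by simp
qed

lemma inner_nbhd_inradius: "inner_nbhd (inradius \<Omega>) \<Omega> = \<Omega>"
  using depth_le_inradius by (auto simp: inner_nbhd_eq)

lemma lmeasurable_inner_nbhd: "inner_nbhd t \<Omega> \<in> lmeasurable"
proof -
  have "inner_nbhd t \<Omega> = \<Omega> \<inter> {x. depth x \<le> t}"
    by (auto simp: inner_nbhd_eq)
  moreover have "closed (\<Omega> \<inter> {x. depth x \<le> t})"
    by (intro closed_Int closed_\<Omega> closed_Collect_le continuous_on_depth continuous_on_const)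
  ultimately have "compact (inner_nbhd t \<Omega>)"
    using bounded_\<Omega> by (simp add: compact_eq_bounded_closed bounded_Int)
  then show ?thesis
    by (rule lmeasurable_compact)
qed

lemma inner_nbhd_mono: "s \<le> t \<Longrightarrow> inner_nbhd s \<Omega> \<subseteq> inner_nbhd t \<Omega>"
  by (auto simp: inner_nbhd_eq)

lemma vol_inner_nbhd_mono: "s \<le> t \<Longrightarrow> vol (inner_nbhd s \<Omega>) \<le> vol (inner_nbhd t \<Omega>)"
  unfolding vol_def
  using inner_nbhd_mono fmeasurableD[OF lmeasurable_inner_nbhd] lmeasurable_inner_nbhd
  by (rule measure_mono_fmeasurable)

lemma vol_inner_nbhd_diff:
  "s \<le> t \<Longrightarrow> vol (inner_nbhd t \<Omega>) - vol (inner_nbhd s \<Omega>) = measure lebesgue (inner_nbhd t \<Omega> - inner_nbhd s \<Omega>)"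
  unfolding vol_def
  using lmeasurable_inner_nbhd fmeasurableD[OF lmeasurable_inner_nbhd] inner_nbhd_mono
  by (rule measurable_measure_Diff[symmetric])

definition ties :: "'a set" where
  "ties = {x. \<exists>p\<in>P. \<exists>q\<in>P. p \<noteq> q \<and> x \<in> cell p \<and> x \<in> cell q}"

lemma negligible_ties: "negligible ties"
proof -
  let ?H = "(\<lambda>(p, q). {x. (fst q - fst p) \<bullet> x = snd q - snd p}) ` {(p, q) \<in> P \<times> P. p \<noteq> q}"
  have "ties \<subseteq> \<Union>?H"
  proof
    fix x assume "x \<in> ties"
    then obtain p q where "p \<in> P" "q \<in> P" "p \<noteq> q" "x \<in> cell p" "x \<in> cell q"
      unfolding ties_def by blast
    then have pq: "p \<in> P" "q \<in> P" "p \<noteq> q" "slack p x = slack q x"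
      unfolding cell_def by simp_all
    then have "x \<in> {x. (fst q - fst p) \<bullet> x = snd q - snd p}"
      by (simp add: slack_def inner_diff_left)
    moreover have "{x. (fst q - fst p) \<bullet> x = snd q - snd p} \<in> ?H"
      using pq by force
    ultimately show "x \<in> \<Union>?H"
      by (rule UnionI[rotated])
  qed
  moreover have "negligible (\<Union>?H)"
  proof (rule negligible_Union)
    show "finite ?H"
      by (intro finite_imageI finite_subset[OF _ finite_cartesian_product[OF finite_P finite_P]]) auto
    show "negligible T" if "T \<in> ?H" for T
    proof -
      obtain p q where "p \<noteq> q" "T = {x. (fst q - fst p) \<bullet> x = snd q - snd p}"
        using \<open>T \<in> ?H\<close> by auto
      then show ?thesis
        by (auto simp: prod_eq_iff intro!: negligible_hyperplane)
    qed
  qed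
  ultimately show ?thesis
    using negligible_subset by blast
qed

lemma measure_eq_sum_cells:
  assumes X: "X \<in> lmeasurable"
  shows "measure lebesgue X = (\<Sum>p\<in>P. measure lebesgue (X \<inter> cell p))"
proof -
  have null: "ties \<in> null_sets lebesgue"
    using negligible_ties negligible_iff_null_sets by blast
  have cells: "X \<inter> cell p \<in> lmeasurable" for p
    using fmeasurable_Int_fmeasurable[OF X closed_imp_sets_lebesgue[OF closed_cell]] .
  have pieces: "X \<inter> cell p - ties \<in> lmeasurable" for p
    using fmeasurable_Diff[OF cells null_setsD2[OF null]] .
  have "X - ties \<subseteq> (\<Union>p\<in>P. X \<inter> cell p - ties)"
  proof
    fix x assume "x \<in> X - ties"
    moreover obtain p where "p \<in> P" "x \<in> cell p"
      by (rule in_some_cell)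
    ultimately show "x \<in> (\<Union>p\<in>P. X \<inter> cell p - ties)"
      by blast
  qed
  then have "X - ties = (\<Union>p\<in>P. X \<inter> cell p - ties)"
    by blast
  then have "measure lebesgue X = measure lebesgue (\<Union>p\<in>P. X \<inter> cell p - ties)"
    using measure_Diff_null_set[OF fmeasurableD[OF X] null] by simp
  also have "\<dots> = (\<Sum>p\<in>P. measure lebesgue (X \<inter> cell p - ties))"
  proof (rule measure_finite_Union[OF finite_P])
    show "(\<lambda>p. X \<inter> cell p - ties) ` P \<subseteq> sets lebesgue"
      using pieces by auto
    show "disjoint_family_on (\<lambda>p. X \<inter> cell p - ties) P"
      unfolding disjoint_family_on_def ties_def by blast
    show "emeasure lebesgue (X \<inter> cell p - ties) \<noteq> \<infinity>" for p
      using fmeasurableD2[OF pieces] by simp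
  qed
  also have "\<dots> = (\<Sum>p\<in>P. measure lebesgue (X \<inter> cell p))"
    using measure_Diff_null_set[OF fmeasurableD[OF cells] null] by simp
  finally show ?thesis .
qed

lemma lmeasurable_shell: "inner_nbhd t \<Omega> - inner_nbhd s \<Omega> \<in> lmeasurable"
  using fmeasurable_Diff[OF lmeasurable_inner_nbhd fmeasurableD[OF lmeasurable_inner_nbhd]] .

lemma lmeasurable_Int_cell: "X \<in> lmeasurable \<Longrightarrow> X \<inter> cell p \<in> lmeasurable"
  using fmeasurable_Int_fmeasurable closed_imp_sets_lebesgue[OF closed_cell] by blast

lemma vol_shell_antimono:
  assumes "0 \<le> s" "s \<le> t" "0 \<le> \<delta>"
  shows "vol (inner_nbhd (t + \<delta>) \<Omega>) - vol (inner_nbhd t \<Omega>) \<le> vol (inner_nbhd (s + \<delta>) \<Omega>) - vol (inner_nbhd s \<Omega>)"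
proof -
  define shell where "shell a = inner_nbhd (a + \<delta>) \<Omega> - inner_nbhd a \<Omega>" for a
  have shell: "shell a \<in> lmeasurable" "shell a \<inter> cell p \<in> lmeasurable" for a p
    unfolding shell_def using lmeasurable_shell lmeasurable_Int_cell by blast+
  have translate: "(+) ((t - s) *\<^sub>R fst p) ` (shell t \<inter> cell p) \<subseteq> shell s \<inter> cell p" if "p \<in> P" for p
  proof clarify
    fix x assume "x \<in> shell t" "x \<in> cell p"
    then have "x \<in> \<Omega>" "t < depth x" "depth x \<le> t + \<delta>"
      unfolding shell_def inner_nbhd_eq by auto
    moreover note depth_translate_along_normal[OF that \<open>x \<in> cell p\<close>, of "t - s"]
    ultimately show "(t - s) *\<^sub>R fst p + x \<in> shell s \<inter> cell p"
      using assms unfolding shell_def inner_nbhd_eq mem_\<Omega>_iff by (auto simp: add.commute)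
  qed
  have "vol (inner_nbhd (t + \<delta>) \<Omega>) - vol (inner_nbhd t \<Omega>) = (\<Sum>p\<in>P. measure lebesgue (shell t \<inter> cell p))"
    unfolding vol_inner_nbhd_diff[OF le_add_same_cancel1[THEN iffD2, OF \<open>0 \<le> \<delta>\<close>]]
    using measure_eq_sum_cells[OF shell(1)] by (simp add: shell_def)
  also have "\<dots> \<le> (\<Sum>p\<in>P. measure lebesgue (shell s \<inter> cell p))"
  proof (rule sum_mono)
    fix p assume "p \<in> P"
    have "measure lebesgue (shell t \<inter> cell p) = measure lebesgue ((+) ((t - s) *\<^sub>R fst p) ` (shell t \<inter> cell p))"
      by (rule measure_translation[symmetric])
    also have "\<dots> \<le> measure lebesgue (shell s \<inter> cell p)"
      using translate[OF \<open>p \<in> P\<close>] fmeasurableD[OF measurable_translation[OF shell(2)]] shell(2)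
      by (rule measure_mono_fmeasurable)
    finally show "measure lebesgue (shell t \<inter> cell p) \<le> measure lebesgue (shell s \<inter> cell p)" .
  qed
  also have "\<dots> = vol (inner_nbhd (s + \<delta>) \<Omega>) - vol (inner_nbhd s \<Omega>)"
    unfolding vol_inner_nbhd_diff[OF le_add_same_cancel1[THEN iffD2, OF \<open>0 \<le> \<delta>\<close>]]
    using measure_eq_sum_cells[OF shell(1)] by (simp add: shell_def)
  finally show ?thesis .
qed

lemma inner_nbhd_subset_facet_slabs:
  assumes "0 < \<delta>"
  shows "inner_nbhd \<delta> \<Omega> \<subseteq> (\<Union>p\<in>P. \<Omega> \<inter> slab (- fst p) (- \<delta> - snd p) (2 * \<delta>))"
proof
  fix y assume "y \<in> inner_nbhd \<delta> \<Omega>"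
  then have "y \<in> \<Omega>" "0 \<le> depth y" "depth y \<le> \<delta>"
    by (auto simp: inner_nbhd_eq mem_\<Omega>_iff)
  moreover obtain p where "p \<in> P" "y \<in> cell p"
    by (rule in_some_cell)
  ultimately have "y \<in> slab (- fst p) (- \<delta> - snd p) (2 * \<delta>)"
    using assms mem_slab_iff_slack[of y p "- \<delta>" "2 * \<delta>"] by (simp add: cell_def)
  then show "y \<in> (\<Union>p\<in>P. \<Omega> \<inter> slab (- fst p) (- \<delta> - snd p) (2 * \<delta>))"
    using \<open>y \<in> \<Omega>\<close> \<open>p \<in> P\<close> by blast
qed

lemma vol_inner_nbhd_le_linear:
  obtains K where "\<And>\<delta>. 0 < \<delta> \<Longrightarrow> vol (inner_nbhd \<delta> \<Omega>) \<le> K * \<delta>"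
proof -
  obtain R where R: "\<Omega> \<subseteq> cball 0 R"
    by (rule \<Omega>_subset_cball)
  define V where "V = measure lebesgue (cball (0::'a) (R + 1))"
  define S where "S \<delta> p = cball 0 R \<inter> slab (- fst p) (- \<delta> - snd p) (2 * \<delta>)" for \<delta> and p :: "'a \<times> real"
  have S: "S \<delta> p \<in> lmeasurable" for \<delta> p
    unfolding S_def by (intro fmeasurable_Int_fmeasurable lmeasurable_cball slab_in_sets_lebesgue)
  have "vol (inner_nbhd \<delta> \<Omega>) \<le> (2 * card P * V) * \<delta>" if "0 < \<delta>" for \<delta>
  proof -
    have "inner_nbhd \<delta> \<Omega> \<subseteq> (\<Union>p\<in>P. S \<delta> p)"
      using inner_nbhd_subset_facet_slabs[OF that] R unfolding S_def by blast
    then have "vol (inner_nbhd \<delta> \<Omega>) \<le> measure lebesgue (\<Union>p\<in>P. S \<delta> p)"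
      unfolding vol_def using S finite_P
      by (intro measure_mono_fmeasurable fmeasurableD[OF lmeasurable_inner_nbhd] fmeasurable.finite_UN) auto
    also have "\<dots> \<le> (\<Sum>p\<in>P. measure lebesgue (S \<delta> p))"
      using S finite_P by (intro measure_UNION_le) auto
    also have "\<dots> \<le> (\<Sum>p\<in>P. V * (2 * \<delta>))"
    proof (rule sum_mono)
      fix p assume "p \<in> P"
      have "(- fst p) \<bullet> (- fst p) = 1" "norm (- fst p) = 1"
        using normal_inner_self[OF \<open>p \<in> P\<close>] unit_normal[OF \<open>p \<in> P\<close>] by simp_all
      then show "measure lebesgue (S \<delta> p) \<le> V * (2 * \<delta>)"
        unfolding S_def V_def using measure_slab_le[of "- fst p" "- fst p" "2 * \<delta>" R] \<open>0 < \<delta>\<close> by simp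
    qed
    finally show ?thesis
      by simp
  qed
  then show thesis
    by (rule that)
qed

definition oblique :: "(('a \<times> real) \<times> ('a \<times> real)) set" where
  "oblique = {(p, q) \<in> P \<times> P. fst q \<noteq> fst p \<and> fst q \<noteq> - fst p}"

definition corner :: "real \<Rightarrow> real \<Rightarrow> 'a \<times> real \<Rightarrow> 'a \<times> real \<Rightarrow> 'a set" where
  "corner t \<delta> p q = {y \<in> \<Omega>. slack p y \<in> {t - \<delta><..t + 2 * \<delta>} \<and> slack q y \<in> {t - \<delta><..t + 2 * \<delta>}}"

lemma depth_retreat_along_normal:
  assumes p: "p \<in> P" "y \<in> cell p" and "0 \<le> \<delta>" "depth y + \<delta> \<le> inradius \<Omega>"
    and gap: "\<And>q. q \<in> P \<Longrightarrow> fst q \<noteq> fst p \<Longrightarrow> fst q \<noteq> - fst p \<Longrightarrow> 2 * \<delta> \<le> slack q y - slack p y"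
  shows "y - \<delta> *\<^sub>R fst p \<in> cell p" "depth (y - \<delta> *\<^sub>R fst p) = depth y + \<delta>"
proof -
  define x where "x = y - \<delta> *\<^sub>R fst p"
  have slack_p: "slack p x = depth y + \<delta>" "slack p y = depth y"
    using p normal_inner_self[OF p(1)] unfolding x_def cell_def by simp_all
  have "slack p x \<le> slack q x" if q: "q \<in> P" for q
  proof -
    have slack_q: "slack q x = slack q y + \<delta> * (fst q \<bullet> fst p)"
      unfolding x_def by simp
    consider "fst q = fst p" | "fst q = - fst p" | "fst q \<noteq> fst p" "fst q \<noteq> - fst p"
      by blast
    then show ?thesis
    proof cases
      case 1
      then show ?thesis
        using slack_p slack_q depth_le_slack[OF q, of y] normal_inner_self[OF p(1)] by simp
    next
      case 2
      then have "2 * inradius \<Omega> \<le> slack p y + slack q y"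
        using opposite_facets_distance[OF p(1) q] by (simp add: slack_def)
      then show ?thesis
        using 2 slack_p slack_q normal_inner_self[OF p(1)] assms(4) by simp
    next
      case 3
      have "- \<delta> \<le> \<delta> * (fst q \<bullet> fst p)"
        using normal_inner_bounds[OF p(1) q] \<open>0 \<le> \<delta>\<close> mult_left_mono[of "- 1" "fst q \<bullet> fst p" \<delta>] by simp
      then show ?thesis
        using gap[OF q 3] slack_p slack_q by simp
    qed
  qed
  then have "depth x = slack p x"
    using depth_le_slack[OF p(1), of x] le_depth_iff[of "slack p x" x] by simp
  then show "y - \<delta> *\<^sub>R fst p \<in> cell p" "depth (y - \<delta> *\<^sub>R fst p) = depth y + \<delta>"
    using slack_p unfolding x_def cell_def by simp_all
qed

lemma shell_subset_translates_and_corners: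
  assumes "0 \<le> \<delta>" "t + \<delta> \<le> inradius \<Omega>"
  shows "inner_nbhd t \<Omega> - inner_nbhd (t - \<delta>) \<Omega> \<subseteq>
           (\<Union>p\<in>P. (+) (\<delta> *\<^sub>R fst p) ` ((inner_nbhd (t + \<delta>) \<Omega> - inner_nbhd t \<Omega>) \<inter> cell p))
           \<union> (\<Union>(p, q)\<in>oblique. corner t \<delta> p q)" (is "_ \<subseteq> ?R")
proof
  fix y assume "y \<in> inner_nbhd t \<Omega> - inner_nbhd (t - \<delta>) \<Omega>"
  then have y: "y \<in> \<Omega>" "t - \<delta> < depth y" "depth y \<le> t"
    by (auto simp: inner_nbhd_eq)
  obtain p where p: "p \<in> P" "y \<in> cell p"
    by (rule in_some_cell)
  show "y \<in> ?R"
  proof (cases "\<forall>q\<in>P. fst q \<noteq> fst p \<and> fst q \<noteq> - fst p \<longrightarrow> 2 * \<delta> \<le> slack q y - slack p y")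
    case True
    then have "y - \<delta> *\<^sub>R fst p \<in> cell p" "depth (y - \<delta> *\<^sub>R fst p) = depth y + \<delta>"
      using depth_retreat_along_normal[OF p \<open>0 \<le> \<delta>\<close>] y assms(2) by auto
    then have "y - \<delta> *\<^sub>R fst p \<in> (inner_nbhd (t + \<delta>) \<Omega> - inner_nbhd t \<Omega>) \<inter> cell p"
      using y \<open>0 \<le> \<delta>\<close> by (auto simp: inner_nbhd_eq mem_\<Omega>_iff)
    then have "y \<in> (+) (\<delta> *\<^sub>R fst p) ` ((inner_nbhd (t + \<delta>) \<Omega> - inner_nbhd t \<Omega>) \<inter> cell p)"
      by (rule image_eqI[rotated]) simp
    then show ?thesis
      using p(1) by blast
  next
    case False
    then obtain q where q: "q \<in> P" "fst q \<noteq> fst p" "fst q \<noteq> - fst p" "slack q y - slack p y < 2 * \<delta>"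
      by auto
    then have "y \<in> corner t \<delta> p q"
      using y p depth_le_slack[OF q(1), of y] by (auto simp: corner_def cell_def)
    moreover have "(p, q) \<in> oblique"
      using p q by (auto simp: oblique_def)
    ultimately show ?thesis
      by blast
  qed
qed

lemma lmeasurable_\<Omega>: "\<Omega> \<in> lmeasurable"
  using closed_\<Omega> bounded_\<Omega> by (intro lmeasurable_compact) (simp add: compact_eq_bounded_closed)

lemma corner_eq_slabs:
  "corner t \<delta> p q = \<Omega> \<inter> slab (- fst p) (t - \<delta> - snd p) (3 * \<delta>) \<inter> slab (- fst q) (t - \<delta> - snd q) (3 * \<delta>)"
  by (auto simp: corner_def slab_def slack_def)

lemma lmeasurable_corner: "corner t \<delta> p q \<in> lmeasurable"
  unfolding corner_eq_slabs
  by (intro fmeasurable_Int_fmeasurable lmeasurable_\<Omega> slab_in_sets_lebesgue)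

lemma finite_oblique: "finite oblique"
  unfolding oblique_def
  by (rule finite_subset[OF _ finite_cartesian_product[OF finite_P finite_P]]) auto

lemma vol_shell_le_next_shell_plus_corners:
  assumes "0 \<le> \<delta>" "t + \<delta> \<le> inradius \<Omega>"
  shows "vol (inner_nbhd t \<Omega>) - vol (inner_nbhd (t - \<delta>) \<Omega>)
           \<le> vol (inner_nbhd (t + \<delta>) \<Omega>) - vol (inner_nbhd t \<Omega>)
             + (\<Sum>(p, q)\<in>oblique. measure lebesgue (corner t \<delta> p q))"
proof -
  define A where "A = inner_nbhd (t + \<delta>) \<Omega> - inner_nbhd t \<Omega>"
  define T where "T p = (+) (\<delta> *\<^sub>R fst p) ` (A \<inter> cell p)" for p
  define C where "C = (\<lambda>(p, q). corner t \<delta> p q)"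
  have T: "T p \<in> lmeasurable" for p
    unfolding T_def A_def by (intro measurable_translation lmeasurable_Int_cell lmeasurable_shell)
  have C: "C pq \<in> lmeasurable" for pq
    unfolding C_def by (simp add: lmeasurable_corner split: prod.split)
  have unions: "(\<Union>p\<in>P. T p) \<in> lmeasurable" "(\<Union>pq\<in>oblique. C pq) \<in> lmeasurable"
    using T C finite_P finite_oblique by (auto intro: fmeasurable.finite_UN)
  have "vol (inner_nbhd t \<Omega>) - vol (inner_nbhd (t - \<delta>) \<Omega>) = measure lebesgue (inner_nbhd t \<Omega> - inner_nbhd (t - \<delta>) \<Omega>)"
    using vol_inner_nbhd_diff \<open>0 \<le> \<delta>\<close> by simp
  also have "\<dots> \<le> measure lebesgue ((\<Union>p\<in>P. T p) \<union> (\<Union>pq\<in>oblique. C pq))"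
    using shell_subset_translates_and_corners[OF assms] fmeasurableD[OF lmeasurable_shell]
      fmeasurable.Un[OF unions]
    unfolding T_def A_def C_def by (rule measure_mono_fmeasurable)
  also have "\<dots> \<le> measure lebesgue (\<Union>p\<in>P. T p) + measure lebesgue (\<Union>pq\<in>oblique. C pq)"
    using unions by (intro measure_Un_le) auto
  also have "measure lebesgue (\<Union>p\<in>P. T p) \<le> (\<Sum>p\<in>P. measure lebesgue (T p))"
    using T finite_P by (intro measure_UNION_le) auto
  also have "(\<Sum>p\<in>P. measure lebesgue (T p)) = measure lebesgue A"
    unfolding T_def measure_translation
    using measure_eq_sum_cells[of A] lmeasurable_shell by (simp add: A_def)
  also have "measure lebesgue (\<Union>pq\<in>oblique. C pq) \<le> (\<Sum>pq\<in>oblique. measure lebesgue (C pq))"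
    using C finite_oblique by (intro measure_UNION_le) auto
  also have "measure lebesgue A = vol (inner_nbhd (t + \<delta>) \<Omega>) - vol (inner_nbhd t \<Omega>)"
    unfolding A_def using vol_inner_nbhd_diff \<open>0 \<le> \<delta>\<close> by simp
  finally show ?thesis
    by (simp add: C_def case_prod_unfold)
qed

lemma measure_corner_le:
  assumes "(p, q) \<in> oblique"
  obtains K where "\<And>t \<delta>. 0 < \<delta> \<Longrightarrow> measure lebesgue (corner t \<delta> p q) \<le> K * \<delta>\<^sup>2"
proof -
  obtain R where R: "\<Omega> \<subseteq> cball 0 R"
    by (rule \<Omega>_subset_cball)
  have pq: "p \<in> P" "q \<in> P" "fst q \<noteq> fst p" "fst q \<noteq> - fst p"
    using assms by (auto simp: oblique_def)
  then have "((- fst p) \<bullet> (- fst q))\<^sup>2 < ((- fst p) \<bullet> (- fst p)) * ((- fst q) \<bullet> (- fst q))"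
    using inner_unit_vectors_square_less_one[of "fst p" "fst q"] unit_normal normal_inner_self by simp
  then obtain e1 e2 where dual: "(- fst p) \<bullet> e1 = 1" "(- fst q) \<bullet> e1 = 0" "(- fst p) \<bullet> e2 = 0" "(- fst q) \<bullet> e2 = 1"
    by (rule exists_dual_pair)
  define V where "V = measure lebesgue (cball (0::'a) (R + (norm e1 + norm e2)))"
  have "measure lebesgue (corner t \<delta> p q) \<le> (9 * V) * \<delta>\<^sup>2" if "0 < \<delta>" for t \<delta>
  proof -
    let ?S = "cball 0 R \<inter> slab (- fst p) (t - \<delta> - snd p) (3 * \<delta>) \<inter> slab (- fst q) (t - \<delta> - snd q) (3 * \<delta>)"
    have "corner t \<delta> p q \<subseteq> ?S"
      using R unfolding corner_eq_slabs by blast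
    moreover have "?S \<in> lmeasurable"
      by (intro fmeasurable_Int_fmeasurable lmeasurable_cball slab_in_sets_lebesgue)
    ultimately have "measure lebesgue (corner t \<delta> p q) \<le> measure lebesgue ?S"
      using fmeasurableD[OF lmeasurable_corner] by (intro measure_mono_fmeasurable)
    also have "\<dots> \<le> V * (3 * \<delta>)\<^sup>2"
      unfolding V_def using measure_double_slab_le[OF dual, of "3 * \<delta>" R] \<open>0 < \<delta>\<close> by simp
    finally show ?thesis
      by (simp add: power_mult_distrib)
  qed
  then show thesis
    by (rule that)
qed

lemma vol_shell_le_next_shell_plus_square:
  obtains K where "\<And>t \<delta>. 0 < \<delta> \<Longrightarrow> t + \<delta> \<le> inradius \<Omega> \<Longrightarrow>
    vol (inner_nbhd t \<Omega>) - vol (inner_nbhd (t - \<delta>) \<Omega>) \<le> vol (inner_nbhd (t + \<delta>) \<Omega>) - vol (inner_nbhd t \<Omega>) + K * \<delta>\<^sup>2"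
proof -
  have "\<forall>pq\<in>oblique. \<exists>K. \<forall>t \<delta>. 0 < \<delta> \<longrightarrow> measure lebesgue (corner t \<delta> (fst pq) (snd pq)) \<le> K * \<delta>\<^sup>2"
    by (metis measure_corner_le prod.collapse)
  then obtain K where K: "\<And>pq t \<delta>. pq \<in> oblique \<Longrightarrow> 0 < \<delta> \<Longrightarrow> measure lebesgue (corner t \<delta> (fst pq) (snd pq)) \<le> K pq * \<delta>\<^sup>2"
    by metis
  have "vol (inner_nbhd t \<Omega>) - vol (inner_nbhd (t - \<delta>) \<Omega>)
          \<le> vol (inner_nbhd (t + \<delta>) \<Omega>) - vol (inner_nbhd t \<Omega>) + (\<Sum>pq\<in>oblique. K pq) * \<delta>\<^sup>2"
    if "0 < \<delta>" "t + \<delta> \<le> inradius \<Omega>" for t \<delta>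
  proof -
    have "(\<Sum>(p, q)\<in>oblique. measure lebesgue (corner t \<delta> p q)) \<le> (\<Sum>pq\<in>oblique. K pq * \<delta>\<^sup>2)"
      using K \<open>0 < \<delta>\<close> by (auto simp: case_prod_unfold intro: sum_mono)
    then show ?thesis
      using vol_shell_le_next_shell_plus_corners[of \<delta> t] that by (simp add: sum_distrib_right)
  qed
  then show thesis
    by (rule that)
qed

lemma vol_inner_nbhd_concave_continuously_differentiable:
  "(\<exists>f'. (\<forall>\<epsilon>\<in>{0..inradius \<Omega>}.
           ((\<lambda>e. vol (inner_nbhd e \<Omega>)) has_real_derivative f' \<epsilon>) (at \<epsilon> within {0..inradius \<Omega>}))
        \<and> continuous_on {0..inradius \<Omega>} f'
        \<and> (\<forall>s\<in>{0..inradius \<Omega>}. \<forall>t\<in>{0..inradius \<Omega>}. s \<le> t \<longrightarrow> f' t \<le> f' s))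
   \<and> concave_on {0..inradius \<Omega>} (\<lambda>e. vol (inner_nbhd e \<Omega>))"
proof -
  obtain K1 where K1: "\<And>\<delta>. 0 < \<delta> \<Longrightarrow> vol (inner_nbhd \<delta> \<Omega>) \<le> K1 * \<delta>"
    using vol_inner_nbhd_le_linear by blast
  obtain K2 where K2: "\<And>t \<delta>. 0 < \<delta> \<Longrightarrow> t + \<delta> \<le> inradius \<Omega> \<Longrightarrow>
      vol (inner_nbhd t \<Omega>) - vol (inner_nbhd (t - \<delta>) \<Omega>)
        \<le> vol (inner_nbhd (t + \<delta>) \<Omega>) - vol (inner_nbhd t \<Omega>) + K2 * \<delta>\<^sup>2"
    using vol_shell_le_next_shell_plus_square by blast
  show ?thesis
    using inradius_pos
  proof (rule concave_continuously_differentiable_if_increments_antimono)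
    show "mono_on {0..inradius \<Omega>} (\<lambda>e. vol (inner_nbhd e \<Omega>))"
      by (intro mono_onI vol_inner_nbhd_mono)
    show "vol (inner_nbhd (t + \<delta>) \<Omega>) - vol (inner_nbhd t \<Omega>) \<le> vol (inner_nbhd (s + \<delta>) \<Omega>) - vol (inner_nbhd s \<Omega>)"
      if "0 \<le> s" "s \<le> t" "0 \<le> \<delta>" for s t \<delta>
      using vol_shell_antimono that .
    show "vol (inner_nbhd (0 + \<delta>) \<Omega>) - vol (inner_nbhd 0 \<Omega>) \<le> K1 * \<delta>" if "0 < \<delta>" for \<delta>
      using K1[OF that] measure_nonneg[of lebesgue "inner_nbhd 0 \<Omega>"] unfolding vol_def add_0_left by linarith
    show "\<exists>K. \<forall>\<delta>. 0 < \<delta> \<longrightarrow> \<delta> < t - 0 \<longrightarrow> \<delta> < inradius \<Omega> - t \<longrightarrow>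
            vol (inner_nbhd t \<Omega>) - vol (inner_nbhd (t - \<delta>) \<Omega>)
              \<le> vol (inner_nbhd (t + \<delta>) \<Omega>) - vol (inner_nbhd t \<Omega>) + K * \<delta>\<^sup>2" for t
      using K2 by force
  qed
qed

lemma vol_inner_nbhd_lower_bounds:
  assumes "\<epsilon> \<in> {0..inradius \<Omega>}"
  shows "\<epsilon> * vol \<Omega> / inradius \<Omega> \<le> vol (inner_nbhd \<epsilon> \<Omega>)"
    and "vol \<Omega> * (1 - (1 - \<epsilon> / inradius \<Omega>) ^ n) / real n \<le> \<epsilon> * vol \<Omega> / inradius \<Omega>"
proof -
  show "\<epsilon> * vol \<Omega> / inradius \<Omega> \<le> vol (inner_nbhd \<epsilon> \<Omega>)"
    using concave_on_Icc_above_chord_from_origin[of "inradius \<Omega>" "\<lambda>e. vol (inner_nbhd e \<Omega>)" \<epsilon>]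
      vol_inner_nbhd_concave_continuously_differentiable inradius_pos assms
    by (simp add: vol_def inner_nbhd_inradius)
  show "vol \<Omega> * (1 - (1 - \<epsilon> / inradius \<Omega>) ^ n) / real n \<le> \<epsilon> * vol \<Omega> / inradius \<Omega>"
    using mult_left_mono[OF one_minus_power_div_le[of "\<epsilon> / inradius \<Omega>" n], of "vol \<Omega>"]
      assms inradius_pos by (simp add: vol_def mult.commute)
qed

end

theorem mainTheorem5:
  fixes \<Omega> :: "'a::euclidean_space set"
  assumes "polytope \<Omega>" and "interior \<Omega> \<noteq> {}"
  shows "(\<exists>f'. (\<forall>\<epsilon>\<in>{0..inradius \<Omega>}.
              ((\<lambda>e. vol (inner_nbhd e \<Omega>)) has_real_derivative f' \<epsilon>)
                (at \<epsilon> within {0..inradius \<Omega>}))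
           \<and> continuous_on {0..inradius \<Omega>} f'
           \<and> (\<forall>s\<in>{0..inradius \<Omega>}. \<forall>t\<in>{0..inradius \<Omega>}. s \<le> t \<longrightarrow> f' t \<le> f' s))
       \<and> concave_on {0..inradius \<Omega>} (\<lambda>e. vol (inner_nbhd e \<Omega>))
       \<and> (\<forall>\<epsilon>\<in>{0..inradius \<Omega>}.
            vol (inner_nbhd \<epsilon> \<Omega>) \<ge> \<epsilon> * vol \<Omega> / inradius \<Omega>
          \<and> \<epsilon> * vol \<Omega> / inradius \<Omega> \<ge>
              vol \<Omega> * (1 - (1 - \<epsilon> / inradius \<Omega>) ^ DIM('a)) / real DIM('a))"
proof -
  obtain P where "finite P" "\<And>p. p \<in> P \<Longrightarrow> norm (fst p) = 1" "\<Omega> = {x. \<forall>p\<in>P. fst p \<bullet> x \<le> snd p}"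
    using polyhedron_unit_normal_representation[OF polytope_imp_polyhedron[OF assms(1)]] by blast
  then interpret normalized_polytope P \<Omega>
    using polytope_imp_bounded[OF assms(1)] assms(2) by unfold_locales
  show ?thesis
    using vol_inner_nbhd_concave_continuously_differentiable vol_inner_nbhd_lower_bounds by auto
qed

end
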